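(* Let $R$ be a principal ideal domain, let $P$ be a lattice with a compatible abelian group structure, and let $O\subseteq P$. Assume there exists $a\in O$ such that no element of $V_a\cap O$ is a minimal element of $O$, where $V_a=\{x\in P: x\le a\}$. Let $M=\bigoplus_{i\in P}M_i$ be a $P$-graded $R[U_0]$-module such that $M_i$ is a nonzero free $R$-module of finite rank for $i\in O$ and $M_i=0$ for $i\notin O$. Then $M$ is not graded projective.
   Context: A lattice is a poset in which any two elements have a join and a meet; a compatible abelian group structure means $(P,+,0)$ is an abelian group with $a\le b\Rightarrow a+c\le b+c$. $U_0=\{s\in P: s\ge 0\}$ and $R[U_0]$ is the monoid ring of finite sums $\sum_{s\in U_0}c_st^s$ ($c_s\in R$), graded by $\deg(ct^s)=s$; a $P$-graded $R[U_0]$-module is the same as a persistence module over $R$ indexed by $P$. A minimal element of $O$ is $m\in O$ such that no $s\in O$ satisfies $s<m$. Graded projective means a graded direct summand of a graded free $R[U_0]$-module. *)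

theory Defs
  imports Complex_Main
begin

definition is_ideal :: "'r::comm_ring_1 set \<Rightarrow> bool" where
  "is_ideal I \<longleftrightarrow> 0 \<in> I \<and> (\<forall>x\<in>I. \<forall>y\<in>I. x + y \<in> I) \<and> (\<forall>r. \<forall>x\<in>I. r * x \<in> I)"

definition pid :: "'r::idom itself \<Rightarrow> bool" where
  "pid _ \<longleftrightarrow> (\<forall>I::'r set. is_ideal I \<longrightarrow> (\<exists>a. I = {a * x | x. True}))"

definition minimal_in :: "'p::order set \<Rightarrow> 'p \<Rightarrow> bool" where
  "minimal_in S m \<longleftrightarrow> m \<in> S \<and> \<not> (\<exists>s\<in>S. s < m)"

text \<open>A P-graded R[U_0]-module, presented as a persistence module over R indexed by P:
  components Mc i (R-submodules of an ambient R-module with scalar action sc) and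
  structure maps phi i j : Mc i -> Mc j for i \<le> j (multiplication by t^(j-i)).\<close>
definition persistence_module ::
  "('r::comm_ring_1 \<Rightarrow> 'm::ab_group_add \<Rightarrow> 'm) \<Rightarrow> ('p::order \<Rightarrow> 'm set) \<Rightarrow> ('p \<Rightarrow> 'p \<Rightarrow> 'm \<Rightarrow> 'm) \<Rightarrow> bool" where
  "persistence_module sc Mc phi \<longleftrightarrow>
     module sc \<and>
     (\<forall>i. module.subspace sc (Mc i)) \<and>
     (\<forall>i j. i \<le> j \<longrightarrow>
        (\<forall>x\<in>Mc i. phi i j x \<in> Mc j) \<and>
        (\<forall>x\<in>Mc i. \<forall>y\<in>Mc i. phi i j (x + y) = phi i j x + phi i j y) \<and>
        (\<forall>r. \<forall>x\<in>Mc i. phi i j (sc r x) = sc r (phi i j x))) \<and>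
     (\<forall>i. \<forall>x\<in>Mc i. phi i i x = x) \<and>
     (\<forall>i j k. i \<le> j \<longrightarrow> j \<le> k \<longrightarrow> (\<forall>x\<in>Mc i. phi j k (phi i j x) = phi i k x))"

definition free_finite_rank :: "('r::comm_ring_1 \<Rightarrow> 'm::ab_group_add \<Rightarrow> 'm) \<Rightarrow> 'm set \<Rightarrow> bool" where
  "free_finite_rank sc N \<longleftrightarrow>
     (\<exists>B. finite B \<and> B \<subseteq> N \<and> \<not> module.dependent sc B \<and> module.span sc B = N)"

text \<open>Degree-j component of the graded free R[U_0]-module with homogeneous basis G,
  basis element g of degree deg g: the free R-module on {g \<in> G. deg g \<le> j},
  realised as finitely supported coefficient functions; the structure maps are inclusions.\<close>
definition free_comp :: "'g set \<Rightarrow> ('g \<Rightarrow> 'p::order) \<Rightarrow> 'p \<Rightarrow> ('g \<Rightarrow> 'r::comm_ring_1) set" where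
  "free_comp G deg j = {f. finite {g. f g \<noteq> 0} \<and> (\<forall>g. f g \<noteq> 0 \<longrightarrow> g \<in> G \<and> deg g \<le> j)}"

text \<open>Graded projective: (isomorphic to) a graded direct summand of a graded free
  R[U_0]-module, i.e. there are degree-preserving R[U_0]-linear maps
  iota : M -> F and pi : F -> M with pi o iota = id.\<close>
definition graded_projective ::
  "'g itself \<Rightarrow> ('r::comm_ring_1 \<Rightarrow> 'm::ab_group_add \<Rightarrow> 'm) \<Rightarrow> ('p::order \<Rightarrow> 'm set) \<Rightarrow> ('p \<Rightarrow> 'p \<Rightarrow> 'm \<Rightarrow> 'm) \<Rightarrow> bool" where
  "graded_projective _ sc Mc phi \<longleftrightarrow>
     (\<exists>(G::'g set) (deg::'g \<Rightarrow> 'p) (\<iota>::'p \<Rightarrow> 'm \<Rightarrow> ('g \<Rightarrow> 'r)) (\<pi>::'p \<Rightarrow> ('g \<Rightarrow> 'r) \<Rightarrow> 'm).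
        (\<forall>j. \<forall>x\<in>Mc j. \<iota> j x \<in> free_comp G deg j) \<and>
        (\<forall>j. \<forall>x\<in>Mc j. \<forall>y\<in>Mc j. \<iota> j (x + y) = (\<lambda>g. \<iota> j x g + \<iota> j y g)) \<and>
        (\<forall>j r. \<forall>x\<in>Mc j. \<iota> j (sc r x) = (\<lambda>g. r * \<iota> j x g)) \<and>
        (\<forall>i j. i \<le> j \<longrightarrow> (\<forall>x\<in>Mc i. \<iota> j (phi i j x) = \<iota> i x)) \<and>
        (\<forall>j. \<forall>f\<in>free_comp G deg j. \<pi> j f \<in> Mc j) \<and>
        (\<forall>j. \<forall>f\<in>free_comp G deg j. \<forall>h\<in>free_comp G deg j. \<pi> j (\<lambda>g. f g + h g) = \<pi> j f + \<pi> j h) \<and>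
        (\<forall>j r. \<forall>f\<in>free_comp G deg j. \<pi> j (\<lambda>g. r * f g) = sc r (\<pi> j f)) \<and>
        (\<forall>i j. i \<le> j \<longrightarrow> (\<forall>f\<in>free_comp G deg i. \<pi> j f = phi i j (\<pi> i f))) \<and>
        (\<forall>j. \<forall>x\<in>Mc j. \<pi> j (\<iota> j x) = x))"

end

theory Submission
  imports Defs
begin

text \<open>Suppose \<open>M\<close> is a graded summand of a free module \<open>F\<close>, via \<open>\<iota> : M \<rightarrow> F\<close> and
  \<open>\<pi> : F \<rightarrow> M\<close>. Since \<open>M\<^sub>a\<close> is finitely generated, \<open>\<iota>\<^sub>a(M\<^sub>a)\<close> involves only a finite set \<open>S\<close>
  of basis elements, and by compatibility with the structure maps so does \<open>\<iota>\<^sub>c(M\<^sub>c)\<close> for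
  every \<open>c \<le> a\<close>, using only those of degree \<open>\<le> c\<close>. Choose \<open>c \<le> a\<close> in \<open>O\<close> for which this
  set \<open>S\<^sub>c\<close> is smallest, and let \<open>d\<close> be the join of the degrees in \<open>S\<^sub>c\<close>. Then \<open>\<iota>\<^sub>c(M\<^sub>c) \<subseteq> F\<^sub>d\<close>, so
  \<open>M\<^sub>c\<close> factors through \<open>M\<^sub>d\<close> via \<open>\<pi>\<^sub>d\<close>, forcing \<open>d \<in> O\<close>; and any \<open>s < d\<close> in \<open>O\<close> would have
  \<open>S\<^sub>s = S\<^sub>c\<close> by minimality, i.e. \<open>d \<le> s\<close>. So \<open>d\<close> is a minimal element of \<open>O\<close> below \<open>a\<close>.\<close>

lemma exists_minimal_below_finite_degrees:
  fixes S :: "'g set" and deg :: "'g \<Rightarrow> 'p::semilattice_sup"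
  defines "below c \<equiv> {g \<in> S. deg g \<le> c}"
  assumes "finite S" and "a \<in> Ob"
    and closed: "\<And>c. c \<in> Ob \<Longrightarrow> c \<le> a \<Longrightarrow> below c \<noteq> {} \<and> Sup_fin (deg ` below c) \<in> Ob"
  shows "\<exists>m. minimal_in Ob m \<and> m \<le> a"
proof -
  obtain c where c: "c \<in> Ob" "c \<le> a"
    and least: "\<And>c'. c' \<in> Ob \<Longrightarrow> c' \<le> a \<Longrightarrow> card (below c) \<le> card (below c')"
    using ex_has_least_nat[of "\<lambda>c. c \<in> Ob \<and> c \<le> a" a "\<lambda>c. card (below c)"] assms(3) by auto
  have fin: "finite (below c')" for c'
    using \<open>finite S\<close> by (simp add: below_def)
  define d where "d = Sup_fin (deg ` below c)"
  have ne: "below c \<noteq> {}" and dO: "d \<in> Ob"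
    using closed[OF c] by (simp_all add: d_def)
  have dc: "d \<le> c"
    using fin ne unfolding d_def by (auto intro!: Sup_fin.boundedI simp: below_def)
  have "minimal_in Ob d"
  proof (unfold minimal_in_def, intro conjI dO notI)
    assume "\<exists>s\<in>Ob. s < d"
    then obtain s where s: "s \<in> Ob" "s < d" by blast
    have "below s \<subseteq> below c"
      using s dc by (auto simp: below_def)
    moreover have "card (below c) \<le> card (below s)"
      using least s dc c by (meson order.strict_implies_order order_trans)
    ultimately have "below s = below c"
      using fin by (meson card_seteq)
    then have "d \<le> s"
      using fin ne unfolding d_def by (auto intro!: Sup_fin.boundedI simp: below_def)
    then show False
      using s by simp
  qed
  then show ?thesis
    using dc c by (meson order_trans)
qed

definition coeff_support :: "('g \<Rightarrow> 'r::zero) \<Rightarrow> 'g set" where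
  "coeff_support f = {g. f g \<noteq> 0}"

locale graded_summand =
  fixes sc :: "'r::comm_ring_1 \<Rightarrow> 'm::ab_group_add \<Rightarrow> 'm"
    and Mc :: "'p::order \<Rightarrow> 'm set"
    and phi :: "'p \<Rightarrow> 'p \<Rightarrow> 'm \<Rightarrow> 'm"
    and G :: "'g set"
    and deg :: "'g \<Rightarrow> 'p"
    and \<iota> :: "'p \<Rightarrow> 'm \<Rightarrow> 'g \<Rightarrow> 'r"
    and \<pi> :: "'p \<Rightarrow> ('g \<Rightarrow> 'r) \<Rightarrow> 'm"
  assumes persistence: "persistence_module sc Mc phi"
    and iota_mem: "\<And>j x. x \<in> Mc j \<Longrightarrow> \<iota> j x \<in> free_comp G deg j"
    and iota_add: "\<And>j x y. x \<in> Mc j \<Longrightarrow> y \<in> Mc j \<Longrightarrow> \<iota> j (x + y) = (\<lambda>g. \<iota> j x g + \<iota> j y g)"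
    and iota_scale: "\<And>j r x. x \<in> Mc j \<Longrightarrow> \<iota> j (sc r x) = (\<lambda>g. r * \<iota> j x g)"
    and iota_phi: "\<And>i j x. i \<le> j \<Longrightarrow> x \<in> Mc i \<Longrightarrow> \<iota> j (phi i j x) = \<iota> i x"
    and pi_mem: "\<And>j f. f \<in> free_comp G deg j \<Longrightarrow> \<pi> j f \<in> Mc j"
    and pi_add: "\<And>j f h. f \<in> free_comp G deg j \<Longrightarrow> h \<in> free_comp G deg j \<Longrightarrow>
      \<pi> j (\<lambda>g. f g + h g) = \<pi> j f + \<pi> j h"
    and pi_scale: "\<And>j r f. f \<in> free_comp G deg j \<Longrightarrow> \<pi> j (\<lambda>g. r * f g) = sc r (\<pi> j f)"
    and pi_phi: "\<And>i j f. i \<le> j \<Longrightarrow> f \<in> free_comp G deg i \<Longrightarrow> \<pi> j f = phi i j (\<pi> i f)"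
    and pi_iota: "\<And>j x. x \<in> Mc j \<Longrightarrow> \<pi> j (\<iota> j x) = x"

lemma graded_projective_imp_graded_summand:
  assumes "persistence_module sc Mc phi" and "graded_projective TYPE('g) sc Mc phi"
  shows "\<exists>(G::'g set) deg \<iota> \<pi>. graded_summand sc Mc phi G deg \<iota> \<pi>"
  using assms unfolding graded_projective_def graded_summand_def Ball_def by simp

context graded_summand
begin

lemma module: "module sc"
  and subspace: "module.subspace sc (Mc i)"
  and phi_mem: "i \<le> j \<Longrightarrow> x \<in> Mc i \<Longrightarrow> phi i j x \<in> Mc j"
  and phi_add: "i \<le> j \<Longrightarrow> x \<in> Mc i \<Longrightarrow> y \<in> Mc i \<Longrightarrow> phi i j (x + y) = phi i j x + phi i j y"
  using persistence by (simp_all add: persistence_module_def)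

lemma zero_mem: "0 \<in> Mc i"
  and add_mem: "x \<in> Mc i \<Longrightarrow> y \<in> Mc i \<Longrightarrow> x + y \<in> Mc i"
  and scale_mem: "x \<in> Mc i \<Longrightarrow> sc r x \<in> Mc i"
  using module.subspace_0[OF module subspace] module.subspace_add[OF module subspace]
    module.subspace_scale[OF module subspace] by blast+

lemma phi_zero: "i \<le> j \<Longrightarrow> phi i j 0 = 0"
  using phi_add[of i j 0 0] zero_mem by simp

lemma pi_zero: "\<pi> j (\<lambda>_. 0) = 0"
proof -
  have "(\<lambda>_. 0) \<in> free_comp G deg j"
    by (simp add: free_comp_def)
  then show ?thesis
    using pi_add[of "\<lambda>_. 0" j "\<lambda>_. 0"] by simp
qed

lemma iota_eq_zero_imp: "x \<in> Mc j \<Longrightarrow> \<iota> j x = (\<lambda>_. 0) \<Longrightarrow> x = 0"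
  using pi_iota pi_zero by metis

lemma coeff_support_iota_zero: "coeff_support (\<iota> j 0) = {}"
proof -
  have "\<iota> j 0 g + \<iota> j 0 g = \<iota> j 0 g" for g
    using iota_add[of 0 j 0] zero_mem by (metis add.right_neutral)
  then show ?thesis
    by (simp add: coeff_support_def)
qed

lemma finite_coeff_support_iota: "x \<in> Mc j \<Longrightarrow> finite (coeff_support (\<iota> j x))"
  using iota_mem by (simp add: free_comp_def coeff_support_def)

lemma deg_le_if_coeff_support_iota: "x \<in> Mc j \<Longrightarrow> g \<in> coeff_support (\<iota> j x) \<Longrightarrow> deg g \<le> j"
  using iota_mem by (auto simp: free_comp_def coeff_support_def)

lemma coeff_support_iota_span:
  assumes "B \<subseteq> Mc a" and "x \<in> module.span sc B"
  shows "coeff_support (\<iota> a x) \<subseteq> (\<Union>b\<in>B. coeff_support (\<iota> a b))"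
proof -
  let ?U = "\<Union>b\<in>B. coeff_support (\<iota> a b)"
  have "x \<in> Mc a \<and> coeff_support (\<iota> a x) \<subseteq> ?U"
  proof (rule module.span_induct_alt[OF module assms(2)])
    show "0 \<in> Mc a \<and> coeff_support (\<iota> a 0) \<subseteq> ?U"
      using zero_mem coeff_support_iota_zero by simp
  next
    fix r b y
    assume b: "b \<in> B" and y: "y \<in> Mc a \<and> coeff_support (\<iota> a y) \<subseteq> ?U"
    then have "b \<in> Mc a" "y \<in> Mc a"
      using assms(1) by auto
    then have "\<iota> a (sc r b + y) = (\<lambda>g. r * \<iota> a b g + \<iota> a y g)"
      using iota_add iota_scale scale_mem by simp
    then have "coeff_support (\<iota> a (sc r b + y)) \<subseteq> coeff_support (\<iota> a b) \<union> coeff_support (\<iota> a y)"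
      by (auto simp: coeff_support_def)
    then show "sc r b + y \<in> Mc a \<and> coeff_support (\<iota> a (sc r b + y)) \<subseteq> ?U"
      using b y \<open>b \<in> Mc a\<close> add_mem scale_mem by blast
  qed
  then show ?thesis ..
qed

lemma finitely_generated_imp_finite_coeff_support:
  assumes "finite B" and "module.span sc B = Mc a"
  obtains S where "finite S" and "\<And>x. x \<in> Mc a \<Longrightarrow> coeff_support (\<iota> a x) \<subseteq> S"
proof
  have "B \<subseteq> Mc a"
    using assms(2) module.span_superset[OF module] by blast
  then show "finite (\<Union>b\<in>B. coeff_support (\<iota> a b))"
    using assms(1) finite_coeff_support_iota by blast
  show "coeff_support (\<iota> a x) \<subseteq> (\<Union>b\<in>B. coeff_support (\<iota> a b))" if "x \<in> Mc a" for x
    using coeff_support_iota_span[OF \<open>B \<subseteq> Mc a\<close>] that assms(2) by blast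
qed

lemma coeff_support_iota_below:
  assumes S: "\<And>x. x \<in> Mc a \<Longrightarrow> coeff_support (\<iota> a x) \<subseteq> S" and "c \<le> a" "y \<in> Mc c"
  shows "coeff_support (\<iota> c y) \<subseteq> {g \<in> S. deg g \<le> c}"
  using S[OF phi_mem[OF assms(2,3)]] iota_phi[OF assms(2,3)] deg_le_if_coeff_support_iota[OF assms(3)]
  by auto

lemma zero_if_iota_degrees_in_zero_component:
  assumes "d \<le> c" and "Mc d = {0}" and "y \<in> Mc c"
    and deg_le: "\<And>g. g \<in> coeff_support (\<iota> c y) \<Longrightarrow> deg g \<le> d"
  shows "y = 0"
proof -
  have in_Fd: "\<iota> c y \<in> free_comp G deg d"
    using iota_mem[OF assms(3)] deg_le by (auto simp: free_comp_def coeff_support_def)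
  have "y = phi d c (\<pi> d (\<iota> c y))"
    using pi_phi[OF assms(1) in_Fd] pi_iota[OF assms(3)] by simp
  also have "\<pi> d (\<iota> c y) = 0"
    using pi_mem[OF in_Fd] assms(2) by blast
  finally show "y = 0"
    using phi_zero[OF assms(1)] by simp
qed

end

lemma graded_summand_exists_minimal_support_below:
  fixes Mc :: "'p::semilattice_sup \<Rightarrow> 'm::ab_group_add set"
  assumes "graded_summand sc Mc phi G deg \<iota> \<pi>"
    and "finite B" and "module.span sc B = Mc a" and "Mc a \<noteq> {0}"
  shows "\<exists>m. minimal_in {i. Mc i \<noteq> {0}} m \<and> m \<le> a"
proof -
  interpret graded_summand sc Mc phi G deg \<iota> \<pi> by fact
  obtain S where "finite S" and S: "\<And>x. x \<in> Mc a \<Longrightarrow> coeff_support (\<iota> a x) \<subseteq> S"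
    using finitely_generated_imp_finite_coeff_support[OF assms(2,3)] by blast
  show ?thesis
  proof (rule exists_minimal_below_finite_degrees[OF \<open>finite S\<close>])
    show "a \<in> {i. Mc i \<noteq> {0}}"
      using assms(4) by simp
  next
    fix c
    assume "c \<in> {i. Mc i \<noteq> {0}}" and "c \<le> a"
    let ?below = "{g \<in> S. deg g \<le> c}"
    have below: "coeff_support (\<iota> c x) \<subseteq> ?below" if "x \<in> Mc c" for x
      using coeff_support_iota_below[OF S \<open>c \<le> a\<close> that] .
    obtain y where y: "y \<in> Mc c" "y \<noteq> 0"
      using \<open>c \<in> {i. Mc i \<noteq> {0}}\<close> zero_mem by blast
    then have "coeff_support (\<iota> c y) \<noteq> {}"
      using iota_eq_zero_imp by (force simp: coeff_support_def)
    then have ne: "?below \<noteq> {}"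
      using below[OF y(1)] by blast
    have fin: "finite ?below"
      using \<open>finite S\<close> by simp
    have "Sup_fin (deg ` ?below) \<le> c"
      using fin ne by (auto intro!: Sup_fin.boundedI)
    moreover have "deg g \<le> Sup_fin (deg ` ?below)" if "x \<in> Mc c" "g \<in> coeff_support (\<iota> c x)" for g x
      using below that fin by (blast intro: Sup_fin.coboundedI)
    ultimately have "Mc (Sup_fin (deg ` ?below)) \<noteq> {0}"
      using zero_if_iota_degrees_in_zero_component y by blast
    with ne show "?below \<noteq> {} \<and> Sup_fin (deg ` ?below) \<in> {i. Mc i \<noteq> {0}}"
      by simp
  qed
qed

theorem lemma5p1:
  fixes sc :: "'r::idom \<Rightarrow> 'm::ab_group_add \<Rightarrow> 'm"
    and Mc :: "'p::{lattice, ordered_ab_group_add} \<Rightarrow> 'm set"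
    and phi :: "'p \<Rightarrow> 'p \<Rightarrow> 'm \<Rightarrow> 'm"
    and Ob :: "'p set"
  assumes "pid TYPE('r)"
    and "\<exists>a\<in>Ob. \<forall>x\<in>Ob. x \<le> a \<longrightarrow> \<not> minimal_in Ob x"
    and "persistence_module sc Mc phi"
    and "\<forall>i\<in>Ob. free_finite_rank sc (Mc i) \<and> Mc i \<noteq> {0}"
    and "\<forall>i. i \<notin> Ob \<longrightarrow> Mc i = {0}"
  shows "\<not> graded_projective TYPE('g) sc Mc phi"
proof
  assume "graded_projective TYPE('g) sc Mc phi"
  with assms(3) obtain G :: "'g set" and deg \<iota> \<pi> where summand: "graded_summand sc Mc phi G deg \<iota> \<pi>"
    using graded_projective_imp_graded_summand by blast
  obtain a where "a \<in> Ob" and no_minimal: "\<forall>x\<in>Ob. x \<le> a \<longrightarrow> \<not> minimal_in Ob x"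
    using assms(2) by blast
  then have "free_finite_rank sc (Mc a)" and "Mc a \<noteq> {0}"
    using assms(4) by simp_all
  then obtain B where "finite B" and "module.span sc B = Mc a"
    unfolding free_finite_rank_def by (elim exE conjE)
  have "Ob = {i. Mc i \<noteq> {0}}"
    using assms(4,5) by blast
  then obtain m where "minimal_in Ob m" "m \<le> a"
    using graded_summand_exists_minimal_support_below[OF summand \<open>finite B\<close>]
      \<open>module.span sc B = Mc a\<close> \<open>Mc a \<noteq> {0}\<close> by blast
  then show False
    using no_minimal by (meson minimal_in_def)
qed

end
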